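(* Let $n\ge5$ and $\alpha^*=\bigl(n(n-1)(n-2),-6(n-2),-8\bigr)$. Then for all $v\in\mathbb{C}^{n-1}$, $$Q\,g_{\alpha^*}(Pv)=c_n\,\bigl(v_1T_1(v),\,v_2T_2(v),\dots,v_{n-1}T_{n-1}(v)\bigr)$$ for a nonzero constant $c_n$ depending only on $n$, where $$T_k(v)=v_k^3-\frac{4}{n-1}\,v_k^2\,S_1(\widehat{v_k})+\frac{12}{(n-1)(n-2)}\,v_k\,S_2(\widehat{v_k})-\frac{24}{(n-1)(n-2)(n-4)}\,S_3(\widehat{v_k}).$$ (For $n=8$, after multiplying by $7$, $T_k=7v_k^3-4v_k^2S_1(\widehat{v_k})+2v_kS_2(\widehat{v_k})-S_3(\widehat{v_k})$.)
   Context: For $x\in\mathbb{C}^n$ let $F_k(x)=\sum_{\ell=1}^n x_\ell^k$, $f_k(x)_\ell=F_k(x)-n\,x_\ell^k$, and $g_\alpha=\alpha_1 f_4+\alpha_2F_2f_2+\alpha_3F_3f_1$. Define linear maps $P:\mathbb{C}^{n-1}\to\mathbb{C}^n$ by $(Pv)_i=\bigl(\sum_{j=1}^{n-1}v_j\bigr)-n\,v_i$ for $1\le i\le n-1$ and $(Pv)_n=\sum_{j=1}^{n-1}v_j$, and $Q:\mathbb{C}^n\to\mathbb{C}^{n-1}$ by $(Qx)_i=x_n-x_i$. (These place the $n$-point orbit of $[1-n,1,\dots,1]$ at the coordinate vertices $[1,0,\dots,0],\dots,[0,\dots,0,1]$ and $[1,\dots,1]$.) For $v\in\mathbb{C}^{n-1}$,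 $\widehat{v_k}\in\mathbb{C}^{n-2}$ denotes $v$ with the $k$-th coordinate deleted, and $S_j$ is the $j$-th elementary symmetric polynomial in $n-2$ variables. *)

theory Defs
  imports Complex_Main
begin

text \<open>Vectors in C^m are represented as functions nat => complex, using the
  coordinates 1..m only (1-based, as in the paper).\<close>

definition F :: "nat \<Rightarrow> nat \<Rightarrow> (nat \<Rightarrow> complex) \<Rightarrow> complex" where
  "F n k x = (\<Sum>l=1..n. x l ^ k)"

definition f :: "nat \<Rightarrow> nat \<Rightarrow> (nat \<Rightarrow> complex) \<Rightarrow> nat \<Rightarrow> complex" where
  "f n k x l = F n k x - of_nat n * x l ^ k"

definition g :: "nat \<Rightarrow> complex \<times> complex \<times> complex \<Rightarrow> (nat \<Rightarrow> complex) \<Rightarrow> nat \<Rightarrow> complex" where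
  "g n \<alpha> x l = (case \<alpha> of (a1, a2, a3) \<Rightarrow>
      a1 * f n 4 x l + a2 * F n 2 x * f n 2 x l + a3 * F n 3 x * f n 1 x l)"

definition P :: "nat \<Rightarrow> (nat \<Rightarrow> complex) \<Rightarrow> nat \<Rightarrow> complex" where
  "P n v i = (if i = n then (\<Sum>j=1..n-1. v j) else (\<Sum>j=1..n-1. v j) - of_nat n * v i)"

definition Q :: "nat \<Rightarrow> (nat \<Rightarrow> complex) \<Rightarrow> nat \<Rightarrow> complex" where
  "Q n x i = x n - x i"

definition esym :: "nat \<Rightarrow> nat set \<Rightarrow> (nat \<Rightarrow> complex) \<Rightarrow> complex" where
  "esym j I v = (\<Sum>A\<in>{A. A \<subseteq> I \<and> card A = j}. \<Prod>i\<in>A. v i)"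

definition Shat :: "nat \<Rightarrow> nat \<Rightarrow> (nat \<Rightarrow> complex) \<Rightarrow> nat \<Rightarrow> complex" where
  "Shat n j v k = esym j ({1..n-1} - {k}) v"

definition T :: "nat \<Rightarrow> (nat \<Rightarrow> complex) \<Rightarrow> nat \<Rightarrow> complex" where
  "T n v k = v k ^ 3
     - 4 / (of_nat n - 1) * v k ^ 2 * Shat n 1 v k
     + 12 / ((of_nat n - 1) * (of_nat n - 2)) * v k * Shat n 2 v k
     - 24 / ((of_nat n - 1) * (of_nat n - 2) * (of_nat n - 4)) * Shat n 3 v k"

definition alpha_star :: "nat \<Rightarrow> complex \<times> complex \<times> complex" where
  "alpha_star n = (of_nat n * (of_nat n - 1) * (of_nat n - 2), - 6 * (of_nat n - 2), - 8)"

end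

theory Submission
  imports Defs
begin

text \<open>The coordinates of Pv are s - n v_l (l < n) and s (l = n), where s = v_1 + ... + v_{n-1}.
  So every power sum F_j(Pv), and hence every coordinate of Q g(Pv), is a polynomial in v_k
  and the power sums of the remaining coordinates; so is (n-1)(n-2)(n-4) T_k(v), once S_1, S_2,
  S_3 are expressed through power sums by Newton's identities. For the weights alpha* the two
  polynomials agree up to the factor n^5 (n-1)(n-2)(n-4).\<close>

definition psum :: "nat \<Rightarrow> nat set \<Rightarrow> (nat \<Rightarrow> complex) \<Rightarrow> complex" where
  "psum j I v = (\<Sum>i\<in>I. v i ^ j)"

lemma psum_remove:
  assumes "finite I" "k \<in> I"
  shows "psum j I v = v k ^ j + psum j (I - {k}) v"
  unfolding psum_def using sum.remove[OF assms] .

lemma esym_insert: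
  assumes "finite I" "a \<notin> I"
  shows "esym (Suc j) (insert a I) v = esym (Suc j) I v + v a * esym j I v"
proof -
  let ?C = "\<lambda>m. {A. A \<subseteq> I \<and> card A = m}"
  have subsets_split: "{A. A \<subseteq> insert a I \<and> card A = Suc j} = ?C (Suc j) \<union> insert a ` ?C j"
  proof (intro equalityI subsetI)
    fix A assume "A \<in> {A. A \<subseteq> insert a I \<and> card A = Suc j}"
    hence A: "A \<subseteq> insert a I" "card A = Suc j" by auto
    show "A \<in> ?C (Suc j) \<union> insert a ` ?C j"
    proof (cases "a \<in> A")
      case True
      have "finite A" using A assms(1) finite_subset by blast
      hence "A = insert a (A - {a})" "card (A - {a}) = j" "A - {a} \<subseteq> I"
        using A True by auto
      thus ?thesis by blast
    next
      case False thus ?thesis using A by auto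
    qed
  next
    fix A assume "A \<in> ?C (Suc j) \<union> insert a ` ?C j"
    thus "A \<in> {A. A \<subseteq> insert a I \<and> card A = Suc j}"
    proof
      assume "A \<in> insert a ` ?C j"
      then obtain B where B: "B \<subseteq> I" "card B = j" "A = insert a B" by auto
      have "finite B" "a \<notin> B" using B assms finite_subset by auto
      thus ?thesis using B by auto
    qed auto
  qed
  have disjoint: "?C (Suc j) \<inter> insert a ` ?C j = {}"
    using assms(2) by auto
  have inj: "inj_on (insert a) (?C j)"
    using assms(2) by (intro inj_onI) (metis (no_types, lifting) Diff_insert_absorb mem_Collect_eq subsetD)
  have "esym (Suc j) (insert a I) v = esym (Suc j) I v + (\<Sum>A\<in>insert a ` ?C j. \<Prod>i\<in>A. v i)"
    unfolding esym_def subsets_split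
    by (rule sum.union_disjoint) (use assms(1) disjoint in auto)
  also have "(\<Sum>A\<in>insert a ` ?C j. \<Prod>i\<in>A. v i) = (\<Sum>A\<in>?C j. v a * (\<Prod>i\<in>A. v i))"
    unfolding sum.reindex[OF inj] o_def
  proof (rule sum.cong[OF refl])
    fix A assume "A \<in> ?C j"
    hence "finite A" "a \<notin> A" using assms finite_subset by auto
    thus "prod v (insert a A) = v a * prod v A" by simp
  qed
  also have "\<dots> = v a * esym j I v"
    unfolding esym_def by (simp add: sum_distrib_left)
  finally show ?thesis .
qed

lemma esym_0:
  assumes "finite I"
  shows "esym 0 I v = 1"
proof -
  have "{A. A \<subseteq> I \<and> card A = 0} = {{}}"
    using assms finite_subset by fastforce
  thus ?thesis unfolding esym_def by simp
qed

lemma esym_Suc_empty: "esym (Suc j) {} v = 0"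
  unfolding esym_def by simp

lemma esym_1: "finite I \<Longrightarrow> esym 1 I v = psum 1 I v"
proof (induction I rule: finite_induct)
  case empty thus ?case using esym_Suc_empty[of 0] by (simp add: psum_def)
next
  case (insert a I) thus ?case using esym_insert[of I a 0 v] esym_0 by (simp add: psum_def)
qed

lemma esym_2: "finite I \<Longrightarrow> 2 * esym 2 I v = psum 1 I v ^ 2 - psum 2 I v"
proof (induction I rule: finite_induct)
  case empty thus ?case using esym_Suc_empty[of 1] by (simp add: numeral_2_eq_2 psum_def)
next
  case (insert a I)
  have "esym 2 (insert a I) v = esym 2 I v + v a * esym 1 I v"
    using esym_insert[of I a 1 v] insert by (simp add: numeral_2_eq_2)
  thus ?case using insert esym_1[of I v] by (simp add: psum_def algebra_simps power2_eq_square)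
qed

lemma esym_3:
  "finite I \<Longrightarrow>
   6 * esym 3 I v = psum 1 I v ^ 3 - 3 * psum 1 I v * psum 2 I v + 2 * psum 3 I v"
proof (induction I rule: finite_induct)
  case empty thus ?case using esym_Suc_empty[of 2] by (simp add: numeral_3_eq_3 psum_def)
next
  case (insert a I)
  have "esym 3 (insert a I) v = esym 3 I v + v a * esym 2 I v"
    using esym_insert[of I a 2 v] insert by (simp add: numeral_3_eq_3 numeral_2_eq_2)
  hence "6 * esym 3 (insert a I) v = 6 * esym 3 I v + 3 * v a * (2 * esym 2 I v)"
    by simp
  thus ?case using insert esym_1[of I v] esym_2[of I v]
    by (simp add: psum_def algebra_simps power2_eq_square power3_eq_cube)
qed

lemma Q_g:
  "Q n (g n (a1, a2, a3) x) k =
     of_nat n * (a1 * (x k ^ 4 - x n ^ 4) + a2 * F n 2 x * (x k ^ 2 - x n ^ 2)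
                 + a3 * F n 3 x * (x k - x n))"
  unfolding Q_def g_def f_def by (simp add: algebra_simps)

lemma P_coord: "k \<in> {1..n-1} \<Longrightarrow> P n v k = psum 1 {1..n-1} v - of_nat n * v k"
  unfolding P_def psum_def by auto

lemma P_last: "P n v n = psum 1 {1..n-1} v"
  unfolding P_def psum_def by simp

lemma F_P:
  assumes "n \<ge> 1"
  shows "F n j (P n v) = (\<Sum>l\<in>{1..n-1}. (psum 1 {1..n-1} v - of_nat n * v l) ^ j)
                          + psum 1 {1..n-1} v ^ j"
proof -
  have "{1..n} = insert n {1..n-1}" "n \<notin> {1..n-1}" using assms by auto
  hence "F n j (P n v) = P n v n ^ j + (\<Sum>l\<in>{1..n-1}. P n v l ^ j)"
    unfolding F_def by simp
  thus ?thesis using P_coord[of _ n v] P_last[of n v] by simp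
qed

lemma F2_P:
  fixes v :: "nat \<Rightarrow> complex"
  assumes "n \<ge> 1"
  defines "N \<equiv> of_nat n :: complex" and "s \<equiv> psum 1 {1..n-1} v"
  shows "F n 2 (P n v) = N^2 * psum 2 {1..n-1} v - N * s^2"
proof -
  have "(\<Sum>l\<in>{1..n-1}. (s - N * v l) ^ 2)
        = (\<Sum>l\<in>{1..n-1}. s^2 - 2 * N * s * v l + N^2 * v l ^ 2)"
    by (simp add: power2_eq_square algebra_simps)
  also have "\<dots> = (N - 1) * s^2 - 2 * N * s * s + N^2 * psum 2 {1..n-1} v"
    using assms(1) unfolding s_def psum_def N_def
    by (simp add: sum.distrib sum_subtractf sum_distrib_left of_nat_diff)
  finally show ?thesis
    using F_P[OF assms(1), of 2 v] unfolding N_def s_def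
    by (simp add: algebra_simps power2_eq_square)
qed

lemma F3_P:
  fixes v :: "nat \<Rightarrow> complex"
  assumes "n \<ge> 1"
  defines "N \<equiv> of_nat n :: complex" and "s \<equiv> psum 1 {1..n-1} v"
  shows "F n 3 (P n v) = -2 * N * s^3 + 3 * N^2 * s * psum 2 {1..n-1} v - N^3 * psum 3 {1..n-1} v"
proof -
  have "(\<Sum>l\<in>{1..n-1}. (s - N * v l) ^ 3)
        = (\<Sum>l\<in>{1..n-1}. s^3 - 3 * N * s^2 * v l + 3 * N^2 * s * v l ^ 2 - N^3 * v l ^ 3)"
    by (simp add: power2_eq_square power3_eq_cube algebra_simps)
  also have "\<dots> = (N - 1) * s^3 - 3 * N * s^2 * s + 3 * N^2 * s * psum 2 {1..n-1} v
                  - N^3 * psum 3 {1..n-1} v"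
    using assms(1) unfolding s_def psum_def N_def
    by (simp add: sum.distrib sum_subtractf sum_distrib_left of_nat_diff)
  finally show ?thesis
    using F_P[OF assms(1), of 3 v] unfolding N_def s_def
    by (simp add: algebra_simps power2_eq_square power3_eq_cube)
qed

lemma T_scaled:
  fixes v :: "nat \<Rightarrow> complex" and k :: nat
  assumes "n \<ge> 5"
  defines "N \<equiv> of_nat n :: complex" and "I \<equiv> {1..n-1} - {k}"
  shows "(N-1) * (N-2) * (N-4) * T n v k =
           v k^3 * (N-1) * (N-2) * (N-4) - 4 * v k^2 * psum 1 I v * (N-2) * (N-4)
           + 6 * v k * (psum 1 I v ^ 2 - psum 2 I v) * (N-4)
           - 4 * (psum 1 I v ^ 3 - 3 * psum 1 I v * psum 2 I v + 2 * psum 3 I v)"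
proof -
  define a b c where "a = N - 1" and "b = N - 2" and "c = N - 4"
  have "N \<noteq> of_nat m" if "m < 5" for m
    using that assms(1) unfolding N_def by (simp only: of_nat_eq_iff)
  from this[of 1] this[of 2] this[of 4]
  have nonzero: "a \<noteq> 0" "b \<noteq> 0" "c \<noteq> 0" unfolding a_def b_def c_def by auto
  have "finite I" unfolding I_def by simp
  hence Shat: "Shat n 1 v k = psum 1 I v"
        "Shat n 2 v k = (psum 1 I v ^ 2 - psum 2 I v) / 2"
        "Shat n 3 v k = (psum 1 I v ^ 3 - 3 * psum 1 I v * psum 2 I v + 2 * psum 3 I v) / 6"
    using esym_1 esym_2[of I v] esym_3[of I v] unfolding Shat_def I_def
    by (simp_all add: field_simps)
  show ?thesis
    using nonzero unfolding T_def Shat N_def[symmetric] a_def[symmetric] b_def[symmetric]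
      c_def[symmetric]
    by (simp add: field_simps)
qed

lemma Q_g_alpha_star_P:
  assumes "n \<ge> 5" "k \<in> {1..n-1}"
  defines "N \<equiv> of_nat n :: complex"
  shows "Q n (g n (alpha_star n) (P n v)) k = N^5 * (N-1) * (N-2) * (N-4) * (v k * T n v k)"
proof -
  define I where "I = {1..n-1} - {k}"
  have split: "psum j {1..n-1} v = v k ^ j + psum j I v" for j
    using psum_remove[OF _ assms(2)] unfolding I_def by simp
  have "n \<ge> 1" using assms(1) by simp
  note expand = Q_g alpha_star_def F2_P[OF this] F3_P[OF this] P_coord[OF assms(2)] P_last
  have "Q n (g n (alpha_star n) (P n v)) k = N^5 * v k * ((N-1) * (N-2) * (N-4) * T n v k)"
    unfolding expand T_scaled[OF assms(1), of v k, folded N_def I_def] N_def[symmetric] split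
    by algebra
  thus ?thesis by (simp add: algebra_simps)
qed

theorem mainTheorem12:
  fixes n :: nat
  assumes "n \<ge> 5"
  shows "\<exists>c::complex. c \<noteq> 0 \<and>
           (\<forall>v::nat \<Rightarrow> complex. \<forall>k\<in>{1..n-1}.
              Q n (g n (alpha_star n) (P n v)) k = c * (v k * T n v k))"
proof (intro exI conjI allI ballI)
  define N :: complex where "N = of_nat n"
  have "N \<noteq> of_nat m" if "m < 5" for m
    using that assms unfolding N_def by (simp only: of_nat_eq_iff)
  from this[of 0] this[of 1] this[of 2] this[of 4]
  show "N^5 * (N-1) * (N-2) * (N-4) \<noteq> 0" by auto
  show "Q n (g n (alpha_star n) (P n v)) k = N^5 * (N-1) * (N-2) * (N-4) * (v k * T n v k)"
    if "k \<in> {1..n-1}" for v k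
    using Q_g_alpha_star_P[OF assms that] unfolding N_def .
qed

end
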